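(* Let $k\ge 1$, $0\le r<k$ and $n\ge1$ be integers, and let $$A_n(k,r,x;q)=\left(q^{(k-r-1)j}\begin{bmatrix} i-k+r+1\\ j\end{bmatrix}_q x^k+q^{(k-r)j}\begin{bmatrix} i+r+1\\ j+1\end{bmatrix}_q\right)_{i,j=0}^{n-1}.$$ Then $x^r\det A_n(k,r,x;q)=F^{(k)}_{kn+r}(x;q)$.
   Context: Here $q$ is an indeterminate and all quantities lie in $\mathbb{Q}(q)[x]$. The $q$-binomial coefficient is defined for integers $m$ (possibly negative) and $j$ by $\begin{bmatrix} m\\ j\end{bmatrix}_q=\prod_{t=0}^{j-1}\frac{1-q^{m-t}}{1-q^{t+1}}$ if $j\ge0$ and $0$ if $j<0$. For an integer $k\ge1$, the $q$-Fibonacci polynomials $F^{(k)}_n(x;q)$ ($n\ge0$) are defined by $F^{(k)}_n(x;q)=x^n$ for $0\le n<k$ and $F^{(k)}_{n+k}(x;q)=xF^{(k)}_{n+k-1}(x;q)+q^nF^{(k)}_n(x;q)$ for $n\ge0$. *)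

theory Defs
  imports "HOL-Computational_Algebra.Polynomial" "HOL-Computational_Algebra.Fraction_Field"
    "Jordan_Normal_Form.Determinant"
begin

type_synonym qfield = "rat poly fract"

definition qv :: qfield where
  "qv = Fract [:0, 1:] 1"

definition qbinom :: "int \<Rightarrow> int \<Rightarrow> qfield" where
  "qbinom m j = (if j < 0 then 0 else
     (\<Prod>t = 0..<nat j. (1 - qv powi (m - int t)) / (1 - qv ^ (t + 1))))"

text \<open>F_n = x^n for n < k, and F_n = x F_(n-1) + q^(n-k) F_(n-k) for n \<ge> k.
  (The case k = 0 is a dummy value, excluded by the hypotheses.)\<close>
function qfib :: "nat \<Rightarrow> nat \<Rightarrow> qfield poly" where
  "qfib k n = (if k = 0 \<or> n < k then monom 1 n
               else monom 1 1 * qfib k (n - 1) + smult (qv ^ (n - k)) (qfib k (n - k)))"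
  by pat_completeness auto
termination by (relation "measure snd") auto

definition A_mat :: "nat \<Rightarrow> nat \<Rightarrow> nat \<Rightarrow> qfield poly mat" where
  "A_mat n k r = mat n n (\<lambda>(i, j).
      smult (qv ^ ((k - r - 1) * j) * qbinom (int i - int k + int r + 1) (int j)) (monom 1 k)
      + [: qv ^ ((k - r) * j) * qbinom (int i + int r + 1) (int j + 1) :])"

end

theory Submission
  imports Defs
begin

text \<open>With the lower unitriangular matrix \<open>P = ([i choose l]_q)\<close>, the q-Vandermonde
  convolution factors \<open>A_n(k, r, x) = P \<cdot> C_r \<cdot> diag(q^((k-r-1) j))\<close>, where the entries of
  \<open>C_r\<close> are again built from q-binomial coefficients. The q-Pascal rule in \<open>r\<close> writes \<open>C_r\<close>
  as a bidiagonal matrix times \<open>C_(r-1)\<close> plus a row shift, and expanding along the last row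
  gives \<open>det A_(n+1)(r) = det A_(n+1)(r-1) + q^(kn+r) det A_n(r)\<close> for \<open>0 < r < k\<close>.
  For \<open>r = 0\<close>, the inverse of the Vandermonde kernel turns \<open>C_(-1)\<close> into a matrix with first
  row \<open>(x^k, 0, \<dots>, 0)\<close> whose complementary minor is essentially \<open>C_(k-1)\<close> of size \<open>n\<close>, so
  \<open>det A_(n+1)(0) = x^k det A_n(k-1) + q^(kn) det A_n(0)\<close>. After multiplication by \<open>x^r\<close>
  these are exactly the defining recurrences of \<open>F^(k)_(kn+r)\<close>.\<close>

section \<open>q-binomial coefficients\<close>

lemma qv_neq_0 [simp]: "qv \<noteq> 0"
  unfolding qv_def by (simp add: Zero_fract_def eq_fract)

lemma qv_power_neq_1:
  assumes "n > 0"
  shows "qv ^ n \<noteq> 1"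
proof
  assume "qv ^ n = 1"
  have "qv ^ n = Fract ([:0, 1:] ^ n) 1"
    by (induct n) (auto simp: qv_def One_fract_def)
  with \<open>qv ^ n = 1\<close> have "[:0, 1 :: rat:] ^ n = 1"
    by (simp add: One_fract_def eq_fract)
  then have "degree ([:0, 1 :: rat:] ^ n) = 0" by simp
  with assms show False by (simp add: degree_power_eq)
qed

lemma one_minus_qv_power_Suc_neq_0 [simp]: "1 - qv ^ Suc t \<noteq> 0"
  using qv_power_neq_1[of "Suc t"] by auto

lemma qv_powi_mult_eq: "a + b = c \<Longrightarrow> qv powi a * qv powi b = qv powi c"
  by (simp add: power_int_add[symmetric])

definition qbinom_num :: "int \<Rightarrow> nat \<Rightarrow> qfield" where
  "qbinom_num m s = (\<Prod>t = 0..<s. 1 - qv powi (m - int t))"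

definition qbinom_den :: "nat \<Rightarrow> qfield" where
  "qbinom_den s = (\<Prod>t = 0..<s. 1 - qv ^ (t + 1))"

lemma qbinom_den_neq_0 [simp]: "qbinom_den s \<noteq> 0"
  unfolding qbinom_den_def by (auto simp: prod_zero_iff qv_power_neq_1 simp del: power_Suc)

lemma qbinom_of_nat: "qbinom m (int s) = qbinom_num m s / qbinom_den s"
  unfolding qbinom_def qbinom_num_def qbinom_den_def by (simp add: prod_dividef)

lemma qbinom_neg [simp]: "j < 0 \<Longrightarrow> qbinom m j = 0"
  unfolding qbinom_def by simp

lemma qbinom_0 [simp]: "qbinom m 0 = 1"
  unfolding qbinom_def by simp

lemma qbinom_num_Suc: "qbinom_num m (Suc s) = qbinom_num m s * (1 - qv powi (m - int s))"
  unfolding qbinom_num_def by simp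

lemma qbinom_num_Suc_shift: "qbinom_num m (Suc s) = (1 - qv powi m) * qbinom_num (m - 1) s"
  unfolding qbinom_num_def by (subst prod.atLeast0_lessThan_Suc_shift) (simp add: algebra_simps)

lemma qbinom_den_Suc: "qbinom_den (Suc s) = qbinom_den s * (1 - qv ^ Suc s)"
  unfolding qbinom_den_def by simp

lemma qbinom_pascal: "qbinom m j = qbinom (m - 1) j + qv powi (m - j) * qbinom (m - 1) (j - 1)"
proof (cases "j \<le> 0")
  case True
  then show ?thesis by (cases "j = 0") auto
next
  case False
  then obtain s where j: "j = int (Suc s)"
    by (metis gr0_implies_Suc not_le zero_less_imp_eq_int of_nat_0_less_iff)
  define P where "P = qbinom_num (m - 1) s"
  define D where "D = qbinom_den s * (1 - qv ^ Suc s)"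
  have "m - 1 - int s = m - j" by (simp add: j)
  moreover have "qv powi (m - j) * qv ^ Suc s = qv powi m"
    by (simp add: j power_int_add[symmetric] flip: power_int_of_nat)
  ultimately have split:
      "1 - qv powi m = (1 - qv powi (m - 1 - int s)) + qv powi (m - j) * (1 - qv ^ Suc s)"
    by (simp add: algebra_simps)
  have "qbinom m j = (1 - qv powi m) * P / D"
    unfolding j qbinom_of_nat qbinom_num_Suc_shift qbinom_den_Suc P_def D_def ..
  also have "\<dots> = P * (1 - qv powi (m - 1 - int s)) / D + qv powi (m - j) * (P / qbinom_den s)"
    unfolding split distrib_right add_divide_distrib using one_minus_qv_power_Suc_neq_0[of s]
    by (simp add: D_def mult_ac del: power_Suc)
  also have "P * (1 - qv powi (m - 1 - int s)) / D = qbinom (m - 1) j"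
    unfolding j qbinom_of_nat qbinom_num_Suc qbinom_den_Suc P_def D_def ..
  also have "P / qbinom_den s = qbinom (m - 1) (j - 1)"
    by (simp add: j P_def qbinom_of_nat)
  finally show ?thesis .
qed

lemma qbinom_eq_0: "l > N \<Longrightarrow> qbinom (int N) (int l) = 0"
  unfolding qbinom_of_nat qbinom_num_def by (simp add: prod_zero_iff) (auto intro!: bexI[of _ N])

lemma qbinom_diag [simp]: "qbinom (int i) (int i) = 1"
proof -
  have "qbinom_num (int i) i = qbinom_den i"
  proof (induct i)
    case (Suc i)
    have "qbinom_num (int (Suc i)) (Suc i) = (1 - qv ^ Suc i) * qbinom_num (int i) i"
      using qbinom_num_Suc_shift[of "int (Suc i)" i] by (simp only: power_int_of_nat) simp
    with Suc show ?case by (simp add: qbinom_den_Suc)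
  qed (simp add: qbinom_num_def qbinom_den_def)
  then show ?thesis by (simp add: qbinom_of_nat)
qed

section \<open>The q-Vandermonde convolution\<close>

text \<open>\<open>vdm_kernel M\<close> is the upper triangular matrix that maps the row \<open>([N choose d]_q)_d\<close>
  of q-binomial coefficients to the row \<open>([N + M choose d]_q)_d\<close>.\<close>

definition vdm_kernel :: "int \<Rightarrow> nat \<Rightarrow> nat \<Rightarrow> qfield" where
  "vdm_kernel M l j = qbinom M (int j - int l) * qv powi (int l * (M - int j + int l))"

lemma vdm_kernel_below [simp]: "j < l \<Longrightarrow> vdm_kernel M l j = 0"
  unfolding vdm_kernel_def by simp

lemma vdm_kernel_diag [simp]: "vdm_kernel M l l = qv powi (int l * M)"
  unfolding vdm_kernel_def by simp

lemma vdm_kernel_0: "vdm_kernel 0 l j = (if l = j then 1 else 0)"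
proof -
  have "qbinom 0 (int j - int l) = 0" if "l < j"
    using that qbinom_eq_0[of 0 "j - l"] by (simp add: of_nat_diff)
  then show ?thesis
    by (cases l j rule: linorder_cases) (simp_all add: vdm_kernel_def)
qed

lemma vdm_kernel_Suc_Suc:
  "qv powi (a - int l) * vdm_kernel M (Suc l) (Suc e) = qv powi (a + M - int e) * vdm_kernel M l e"
proof -
  have "qv powi (a - int l) * qv powi (int (Suc l) * (M - int (Suc e) + int (Suc l)))
      = qv powi (a + M - int e) * qv powi (int l * (M - int e + int l))"
    by (simp add: qv_powi_mult_eq) (simp add: algebra_simps)
  then show ?thesis
    unfolding vdm_kernel_def by (simp add: ac_simps)
qed

lemma vdm_kernel_pascal:
  "vdm_kernel m l j = qv ^ l * vdm_kernel (m - 1) l j + vdm_kernel (m - 1) (Suc l) j"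
proof -
  define d where "d = int j - int l"
  define E where "E = int l * (m - int j + int l)"
  have "qv ^ l * vdm_kernel (m - 1) l j = qbinom (m - 1) d * qv powi E"
  proof -
    have "qv powi int l * qv powi (int l * (m - 1 - int j + int l)) = qv powi E"
      by (rule qv_powi_mult_eq) (simp add: E_def algebra_simps)
    then show ?thesis
      by (simp add: vdm_kernel_def d_def mult_ac flip: power_int_of_nat)
  qed
  moreover have "vdm_kernel (m - 1) (Suc l) j = qv powi (m - d) * qbinom (m - 1) (d - 1) * qv powi E"
  proof -
    have "qv powi (m - d) * qv powi E = qv powi (int (Suc l) * (m - 1 - int j + int (Suc l)))"
      by (rule qv_powi_mult_eq) (simp add: E_def d_def algebra_simps)
    then show ?thesis
      by (simp add: vdm_kernel_def d_def algebra_simps)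
  qed
  moreover have "vdm_kernel m l j = qbinom m d * qv powi E"
    by (simp add: vdm_kernel_def d_def E_def)
  ultimately show ?thesis
    by (simp add: qbinom_pascal[of m d] algebra_simps)
qed

theorem qvandermonde:
  "qbinom (int N + M) (int d) = (\<Sum>l\<le>d. qbinom (int N) (int l) * vdm_kernel M l d)"
proof (induct N arbitrary: d)
  case 0
  have "qbinom 0 (1 + int l) = 0" for l
    using qbinom_eq_0[of 0 "Suc l"] by simp
  then have "(\<Sum>l\<le>d. qbinom 0 (int l) * vdm_kernel M l d) = vdm_kernel M 0 d"
    by (subst sum.atMost_shift) simp
  then show ?case by (simp add: vdm_kernel_def)
next
  case (Suc N)
  show ?case
  proof (cases d)
    case 0
    then show ?thesis by (simp add: vdm_kernel_def)
  next
    case (Suc e)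
    have "(\<Sum>l\<le>d. qbinom (int (Suc N)) (int l) * vdm_kernel M l d)
        = (\<Sum>l\<le>d. qbinom (int N) (int l) * vdm_kernel M l d)
          + (\<Sum>l\<le>d. qv powi (int N + 1 - int l) * qbinom (int N) (int l - 1) * vdm_kernel M l d)"
      by (subst qbinom_pascal) (simp add: sum.distrib algebra_simps)
    also have "(\<Sum>l\<le>d. qv powi (int N + 1 - int l) * qbinom (int N) (int l - 1) * vdm_kernel M l d)
        = (\<Sum>l\<le>e. qbinom (int N) (int l) * (qv powi (int N - int l) * vdm_kernel M (Suc l) d))"
      unfolding Suc sum.atMost_Suc_shift by (simp add: mult_ac)
    also have "\<dots> = qv powi (int N + M - int e) * (\<Sum>l\<le>e. qbinom (int N) (int l) * vdm_kernel M l e)"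
      unfolding Suc vdm_kernel_Suc_Suc sum_distrib_left by (simp add: mult_ac)
    finally have "(\<Sum>l\<le>d. qbinom (int (Suc N)) (int l) * vdm_kernel M l d)
        = qbinom (int N + M) (int d) + qv powi (int N + M - int e) * qbinom (int N + M) (int e)"
      by (simp only: Suc.hyps)
    moreover have "qbinom (int (Suc N) + M) (int d)
        = qbinom (int N + M) (int d) + qv powi (int N + M - int e) * qbinom (int N + M) (int e)"
      using qbinom_pascal[of "int (Suc N) + M" "int d"] by (simp add: Suc algebra_simps)
    ultimately show ?thesis by simp
  qed
qed

lemma qvandermonde_lessThan:
  assumes "i < n"
  shows "(\<Sum>l<n. qbinom (int i) (int l) * vdm_kernel M l d) = qbinom (int i + M) (int d)"
proof -
  have "(\<Sum>l<n. qbinom (int i) (int l) * vdm_kernel M l d)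
      = (\<Sum>l\<le>d. qbinom (int i) (int l) * vdm_kernel M l d)"
    by (intro sum.mono_neutral_cong) (use assms qbinom_eq_0[of i] in auto)
  then show ?thesis by (simp add: qvandermonde)
qed

lemma vdm_kernel_neg_mult_vdm_kernel:
  "vdm_kernel (- int K) l (s + l) * vdm_kernel (int K) (s + l) (l + (t + s))
    = qv powi (int (t + s) * (int K - int l))
      * (qbinom (int K) (int t) * vdm_kernel (- int K) t (t + s))"
proof -
  have "qv powi (int l * (- int K - int (s + l) + int l))
        * qv powi (int (s + l) * (int K - int (l + (t + s)) + int (s + l)))
      = qv powi (int (t + s) * (int K - int l)) * qv powi (int t * (- int K - int (t + s) + int t))"
    by (simp add: power_int_add[symmetric]) (simp add: algebra_simps)
  then show ?thesis
    unfolding vdm_kernel_def by (simp add: ac_simps)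
qed

lemma vdm_kernel_inverse:
  assumes "l < N" "j < N"
  shows "(\<Sum>m<N. vdm_kernel (- int K) l m * vdm_kernel (int K) m j) = (if l = j then 1 else 0)"
proof (cases "l \<le> j")
  case True
  then obtain d where j: "j = l + d" using le_Suc_ex by blast
  have "(\<Sum>m<N. vdm_kernel (- int K) l m * vdm_kernel (int K) m j)
      = (\<Sum>m = l..l + d. vdm_kernel (- int K) l m * vdm_kernel (int K) m j)"
    by (rule sum.mono_neutral_right) (use assms j in auto)
  also have "\<dots> = (\<Sum>s\<le>d. vdm_kernel (- int K) l (s + l) * vdm_kernel (int K) (s + l) (l + d))"
    by (rule sum.reindex_bij_witness[of _ "\<lambda>s. s + l" "\<lambda>m. m - l"]) (auto simp: j)
  also have "\<dots> = (\<Sum>t\<le>d.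
      vdm_kernel (- int K) l (d - t + l) * vdm_kernel (int K) (d - t + l) (l + d))"
    by (rule sum.reindex_bij_witness[of _ "\<lambda>t. d - t" "\<lambda>s. d - s"]) auto
  also have "\<dots> = qv powi (int d * (int K - int l))
      * (\<Sum>t\<le>d. qbinom (int K) (int t) * vdm_kernel (- int K) t d)"
    unfolding sum_distrib_left
  proof (rule sum.cong[OF refl])
    fix t assume "t \<in> {..d}"
    then obtain s where "d = t + s" using le_Suc_ex by auto
    then show "vdm_kernel (- int K) l (d - t + l) * vdm_kernel (int K) (d - t + l) (l + d)
        = qv powi (int d * (int K - int l)) * (qbinom (int K) (int t) * vdm_kernel (- int K) t d)"
      using vdm_kernel_neg_mult_vdm_kernel[of K l s t] by simp
  qed
  also have "\<dots> = qv powi (int d * (int K - int l)) * qbinom 0 (int d)"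
    using qvandermonde[of K "- int K" d] by simp
  also have "\<dots> = (if l = j then 1 else 0)"
    using qbinom_eq_0[of 0 d] j by simp
  finally show ?thesis .
next
  case False
  then have "vdm_kernel (- int K) l m * vdm_kernel (int K) m j = 0" for m
    by (cases "m < l") auto
  with False show ?thesis by (simp only: sum.neutral_const) simp
qed

lemma det_scale_rows_cols:
  fixes N :: "nat \<Rightarrow> nat \<Rightarrow> 'a::comm_ring_1"
  shows "det (mat n n (\<lambda>(l, j). a l * b j * N l j))
    = (\<Prod>l<n. a l) * (\<Prod>j<n. b j) * det (mat n n (\<lambda>(l, j). N l j))"
proof -
  define Da where "Da = mat n n (\<lambda>(l, j). if l = j then a l else 0)"
  define Db where "Db = mat n n (\<lambda>(l, j). if l = j then b l else 0)"
  define NN where "NN = mat n n (\<lambda>(l, j). N l j)"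
  have Da: "Da \<in> carrier_mat n n" and Db: "Db \<in> carrier_mat n n" and NN: "NN \<in> carrier_mat n n"
    by (auto simp: Da_def Db_def NN_def)
  have "mat n n (\<lambda>(l, j). a l * b j * N l j) = Da * NN * Db"
  proof (rule eq_matI)
    fix i j assume "i < dim_row (Da * NN * Db)" and "j < dim_col (Da * NN * Db)"
    then have i: "i < n" and j: "j < n" using Da Db NN by auto
    have "(Da * NN * Db) $$ (i, j) = (\<Sum>m<n. (Da * NN) $$ (i, m) * Db $$ (m, j))"
      using i j Da Db NN by (simp add: scalar_prod_def atLeast0LessThan del: assoc_mult_mat)
    also have "\<dots> = (Da * NN) $$ (i, j) * b j"
      by (subst sum.remove[of _ j]) (use j in \<open>auto simp: Db_def intro!: sum.neutral\<close>)
    also have "(Da * NN) $$ (i, j) = (\<Sum>m<n. Da $$ (i, m) * NN $$ (m, j))"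
      using i j Da Db NN by (simp add: scalar_prod_def atLeast0LessThan del: assoc_mult_mat)
    also have "\<dots> = a i * N i j"
      by (subst sum.remove[of _ i]) (use i j in \<open>auto simp: Da_def NN_def intro!: sum.neutral\<close>)
    finally show "mat n n (\<lambda>(l, j). a l * b j * N l j) $$ (i, j) = (Da * NN * Db) $$ (i, j)"
      using i j by (simp add: mult_ac)
  qed (use Da Db NN in auto)
  moreover have "det Da = (\<Prod>l<n. a l)" "det Db = (\<Prod>l<n. b l)"
    by (subst det_upper_triangular; auto simp: Da_def Db_def prod_list_diag_prod atLeast0LessThan
        intro!: upper_triangularI)+
  ultimately show ?thesis
    unfolding NN_def[symmetric] using Da Db NN by (simp add: det_mult[of _ n] mult_ac)
qed

lemma det_scaled_plus_next_row_truncated: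
  fixes c :: "nat \<Rightarrow> nat \<Rightarrow> 'a::comm_ring_1" and w :: "nat \<Rightarrow> 'a"
  shows "det (mat (Suc n) (Suc n) (\<lambda>(l, j). w l * c l j + (if l < n then c (Suc l) j else 0)))
    = (\<Prod>l<Suc n. w l) * det (mat (Suc n) (Suc n) (\<lambda>(l, j). c l j))"
proof -
  define C where "C = mat (Suc n) (Suc n) (\<lambda>(l, j). c l j)"
  define E where
    "E = mat (Suc n) (Suc n) (\<lambda>(l, j). if j = l then w l else if j = Suc l then 1 else (0::'a))"
  have C: "C \<in> carrier_mat (Suc n) (Suc n)" and E: "E \<in> carrier_mat (Suc n) (Suc n)"
    by (auto simp: C_def E_def)
  have "mat (Suc n) (Suc n) (\<lambda>(l, j). w l * c l j + (if l < n then c (Suc l) j else 0)) = E * C"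
  proof (rule eq_matI, goal_cases entries)
    case (entries l j)
    then have l: "l < Suc n" and j: "j < Suc n" using C E by auto
    have "(E * C) $$ (l, j) = (\<Sum>m<Suc n. E $$ (l, m) * c m j)"
      using l j by (simp add: E_def C_def scalar_prod_def atLeast0LessThan)
    also have "\<dots> = (\<Sum>m\<in>{l} \<union> (if l < n then {Suc l} else {}). E $$ (l, m) * c m j)"
      by (rule sum.mono_neutral_right) (use l in \<open>auto simp: E_def\<close>)
    also have "\<dots> = w l * c l j + (if l < n then c (Suc l) j else 0)"
      using l by (auto simp: E_def)
    finally show ?case
      using l j by simp
  qed (use C E in auto)
  moreover have "det E = (\<Prod>l<Suc n. w l)"
    by (subst det_upper_triangular[OF _ E])
      (auto simp: E_def prod_list_diag_prod atLeast0LessThan intro!: upper_triangularI)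
  ultimately show ?thesis
    unfolding C_def[symmetric] using det_mult[OF E C] by simp
qed

text \<open>In the last row the matrix differs from the truncated one only by \<open>c (Suc n) n\<close>,
  whose cofactor is the same determinant of size \<open>n\<close>.\<close>

lemma det_scaled_plus_next_row:
  fixes c :: "nat \<Rightarrow> nat \<Rightarrow> 'a::comm_ring_1" and w :: "nat \<Rightarrow> 'a"
  assumes "\<And>j. j < n \<Longrightarrow> c (Suc n) j = 0"
  shows "det (mat (Suc n) (Suc n) (\<lambda>(l, j). w l * c l j + c (Suc l) j))
    = (\<Prod>l<Suc n. w l) * det (mat (Suc n) (Suc n) (\<lambda>(l, j). c l j))
      + c (Suc n) n * det (mat n n (\<lambda>(l, j). w l * c l j + c (Suc l) j))"
proof -
  define M where "M = mat (Suc n) (Suc n) (\<lambda>(l, j). w l * c l j + c (Suc l) j)"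
  define B where
    "B = mat (Suc n) (Suc n) (\<lambda>(l, j). w l * c l j + (if l < n then c (Suc l) j else 0))"
  have M: "M \<in> carrier_mat (Suc n) (Suc n)" and B: "B \<in> carrier_mat (Suc n) (Suc n)"
    by (auto simp: M_def B_def)
  have "det M = (\<Sum>j<Suc n. M $$ (n, j) * cofactor M n j)"
    by (rule laplace_expansion_row[OF M]) simp
  also have "\<dots> = (\<Sum>j<Suc n. B $$ (n, j) * cofactor B n j + c (Suc n) j * cofactor M n j)"
  proof (rule sum.cong[OF refl])
    fix j assume j: "j \<in> {..<Suc n}"
    then have "M $$ (n, j) = B $$ (n, j) + c (Suc n) j"
      by (simp add: M_def B_def)
    moreover have "mat_delete M n j = mat_delete B n j"
      by (rule eq_matI) (use M B in \<open>auto simp: mat_delete_def M_def B_def\<close>)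
    ultimately show "M $$ (n, j) * cofactor M n j
        = B $$ (n, j) * cofactor B n j + c (Suc n) j * cofactor M n j"
      by (simp add: cofactor_def algebra_simps)
  qed
  also have "\<dots> = det B + c (Suc n) n * cofactor M n n"
    unfolding sum.distrib laplace_expansion_row[OF B, of n, symmetric, OF lessI]
    by (simp add: assms)
  also have "cofactor M n n = det (mat n n (\<lambda>(l, j). w l * c l j + c (Suc l) j))"
  proof -
    have "mat_delete M n n = mat n n (\<lambda>(l, j). w l * c l j + c (Suc l) j)"
      by (rule eq_matI) (auto simp: mat_delete_def M_def)
    then show ?thesis by (simp add: cofactor_def)
  qed
  finally show ?thesis
    unfolding M_def B_def det_scaled_plus_next_row_truncated .
qed

lemma det_expand_first_row:
  fixes M :: "'a::comm_ring_1 mat"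
  assumes M: "M \<in> carrier_mat (Suc n) (Suc n)"
    and zero: "\<And>j. 0 < j \<Longrightarrow> j < Suc n \<Longrightarrow> M $$ (0, j) = 0"
  shows "det M = M $$ (0, 0) * det (mat n n (\<lambda>(l, j). M $$ (Suc l, Suc j)))"
proof -
  have "det M = (\<Sum>j<Suc n. M $$ (0, j) * cofactor M 0 j)"
    by (rule laplace_expansion_row[OF M]) simp
  also have "\<dots> = M $$ (0, 0) * cofactor M 0 0"
    by (subst sum.lessThan_Suc_shift) (simp add: zero)
  also have "mat_delete M 0 0 = mat n n (\<lambda>(l, j). M $$ (Suc l, Suc j))"
    by (rule eq_matI) (use M in \<open>auto simp: mat_delete_def\<close>)
  then have "cofactor M 0 0 = det (mat n n (\<lambda>(l, j). M $$ (Suc l, Suc j)))"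
    by (simp add: cofactor_def)
  finally show ?thesis .
qed

section \<open>Factoring the matrix\<close>

text \<open>\<open>c_entry k (x^k) r\<close> are the entries of the middle factor \<open>C_r\<close> of \<open>A_n\<close>
  (lemma \<open>det_A_mat_eq_c_det\<close>). The parameter \<open>r\<close> is an integer so that \<open>C_(-1)\<close>
  makes sense.\<close>

definition c_entry :: "nat \<Rightarrow> qfield poly \<Rightarrow> int \<Rightarrow> nat \<Rightarrow> nat \<Rightarrow> qfield poly" where
  "c_entry k X r l j =
    [:vdm_kernel (r + 1 - int k) l j:] * X + [:vdm_kernel (r + 1) l (Suc j) * qv ^ j:]"

definition c_det :: "nat \<Rightarrow> qfield poly \<Rightarrow> int \<Rightarrow> nat \<Rightarrow> qfield poly" where
  "c_det k X r n = det (mat n n (\<lambda>(l, j). c_entry k X r l j))"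

lemma c_entry_pascal:
  "c_entry k X r l j = [:qv ^ l:] * c_entry k X (r - 1) l j + c_entry k X (r - 1) (Suc l) j"
proof -
  have a: "vdm_kernel (r + 1 - int k) l j
      = qv ^ l * vdm_kernel (r - 1 + 1 - int k) l j + vdm_kernel (r - 1 + 1 - int k) (Suc l) j"
    using vdm_kernel_pascal[of "r + 1 - int k" l j] by simp
  have b: "vdm_kernel (r + 1) l (Suc j)
      = qv ^ l * vdm_kernel (r - 1 + 1) l (Suc j) + vdm_kernel (r - 1 + 1) (Suc l) (Suc j)"
    using vdm_kernel_pascal[of "r + 1" l "Suc j"] by simp
  have "[:x + y:] = [:x:] + [:y:]" for x y :: qfield
    by simp
  then show ?thesis
    unfolding c_entry_def a b mult_to_poly[symmetric] by (simp add: algebra_simps smult_add_left)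
qed

lemma c_det_Suc:
  "c_det k X (int r) (Suc n)
    = [:qv ^ (\<Sum>l<Suc n. l):] * c_det k X (int r - 1) (Suc n)
      + [:qv ^ (n + Suc n * r):] * c_det k X (int r) n"
proof -
  have "c_entry k X (int r - 1) (Suc n) j = 0" if "j < n" for j
    using that by (simp add: c_entry_def)
  moreover have "c_entry k X (int r - 1) (Suc n) n = [:qv ^ (n + Suc n * r):]"
  proof -
    have "qv powi (int (Suc n) * int r) = qv ^ (Suc n * r)"
      by (metis of_nat_mult power_int_of_nat)
    then show ?thesis by (simp add: c_entry_def power_add mult_ac)
  qed
  moreover have "(\<Prod>l<Suc n. [:qv ^ l:]) = [:qv ^ (\<Sum>l<Suc n. l):]"
    by (simp only: prod_to_poly power_sum)
  moreover have "(\<lambda>(l, j). [:qv ^ l:] * c_entry k X (int r - 1) l j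
        + c_entry k X (int r - 1) (Suc l) j) = (\<lambda>(l, j). c_entry k X (int r) l j)"
    using c_entry_pascal[of k X "int r"] by auto
  ultimately show ?thesis
    using det_scaled_plus_next_row[of n "c_entry k X (int r - 1)" "\<lambda>l. [:qv ^ l:]"]
    unfolding c_det_def by simp
qed

lemma c_entry_mult_vdm_kernel:
  assumes "l < N" "j < N"
  shows "(\<Sum>m<N. c_entry k X (-1) l m * [:vdm_kernel (int k) m j:])
    = X * [:if l = j then 1 else 0:]
      + [:if l = 0 then 0 else qv ^ (l - 1) * vdm_kernel (int k) (l - 1) j:]"
proof -
  have "c_entry k X (-1) l m * [:vdm_kernel (int k) m j:]
      = X * [:vdm_kernel (- int k) l m * vdm_kernel (int k) m j:]
        + [:(if l = Suc m then qv ^ m else 0) * vdm_kernel (int k) m j:]" for m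
  proof -
    have "c_entry k X (-1) l m = [:vdm_kernel (- int k) l m:] * X + [:if l = Suc m then qv ^ m else 0:]"
      by (simp add: c_entry_def vdm_kernel_0)
    then show ?thesis
      unfolding mult_to_poly[symmetric] by (simp only: distrib_left distrib_right mult_ac)
  qed
  then have "(\<Sum>m<N. c_entry k X (-1) l m * [:vdm_kernel (int k) m j:])
      = X * [:\<Sum>m<N. vdm_kernel (- int k) l m * vdm_kernel (int k) m j:]
        + [:\<Sum>m<N. (if l = Suc m then qv ^ m else 0) * vdm_kernel (int k) m j:]"
    by (simp only: sum.distrib sum_to_poly[symmetric] sum_distrib_left)
  also have "(\<Sum>m<N. (if l = Suc m then qv ^ m else 0) * vdm_kernel (int k) m j)
      = (if l = 0 then 0 else qv ^ (l - 1) * vdm_kernel (int k) (l - 1) j)"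
  proof (cases l)
    case (Suc l')
    have "(\<Sum>m<N. (if l = Suc m then qv ^ m else 0) * vdm_kernel (int k) m j)
        = (\<Sum>m\<in>{l'}. (if l = Suc m then qv ^ m else 0) * vdm_kernel (int k) m j)"
      by (rule sum.mono_neutral_right) (use assms(1) Suc in auto)
    then show ?thesis using Suc by simp
  qed simp
  finally show ?thesis
    by (simp add: vdm_kernel_inverse assms)
qed

lemma det_vdm_kernel_mat:
  "det (mat N N (\<lambda>(m, j). [:vdm_kernel (int k) m j:])) = [:qv ^ (k * (\<Sum>l<N. l)):]"
proof -
  have "det (mat N N (\<lambda>(m, j). [:vdm_kernel (int k) m j:])) = (\<Prod>l<N. [:qv ^ (k * l):])"
    by (subst det_upper_triangular)
      (auto simp: prod_list_diag_prod atLeast0LessThan mult.commute intro!: upper_triangularI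
        simp flip: power_int_of_nat of_nat_mult)
  then show ?thesis
    by (simp only: prod_to_poly power_sum sum_distrib_left)
qed

text \<open>Multiplying \<open>C_(-1)\<close> on the right by \<open>vdm_kernel k\<close> inverts its \<open>X\<close>-part
  (lemma \<open>vdm_kernel_inverse\<close>); the first row of the product becomes \<open>(X, 0, \<dots>, 0)\<close>,
  and the complementary minor is \<open>C_(k-1)\<close> with rows and columns rescaled.\<close>

lemma c_det_minus_one:
  "c_det k X (-1) (Suc n) * [:qv ^ (k * (\<Sum>l<Suc n. l)):] = X * c_det k X (int k - 1) n"
proof -
  define C where "C = mat (Suc n) (Suc n) (\<lambda>(l, j). c_entry k X (-1) l j)"
  define V where "V = mat (Suc n) (Suc n) (\<lambda>(m, j). [:vdm_kernel (int k) m j:])"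
  have C: "C \<in> carrier_mat (Suc n) (Suc n)" and V: "V \<in> carrier_mat (Suc n) (Suc n)"
    by (auto simp: C_def V_def)
  have CV: "(C * V) $$ (l, j) = X * [:if l = j then 1 else 0:]
      + [:if l = 0 then 0 else qv ^ (l - 1) * vdm_kernel (int k) (l - 1) j:]"
    if "l < Suc n" "j < Suc n" for l j
    using that c_entry_mult_vdm_kernel[OF that]
    by (simp add: C_def V_def scalar_prod_def atLeast0LessThan)
  have minor: "mat n n (\<lambda>(l, j). (C * V) $$ (Suc l, Suc j))
      = mat n n (\<lambda>(l, j). [:qv ^ l:] * [:qv powi (- int j):] * c_entry k X (int k - 1) l j)"
  proof (rule eq_matI, goal_cases entries)
    case (entries l j)
    then have l: "l < n" and j: "j < n" by auto
    have "qv ^ l * qv powi (- int j) * qv ^ j = qv ^ l"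
      and "l = j \<Longrightarrow> qv ^ l * qv powi (- int j) = 1"
      by (simp_all add: power_int_minus field_simps)
    then show ?case
      using l j by (simp add: CV c_entry_def vdm_kernel_0 mult_to_poly algebra_simps smult_add_right)
  qed auto
  have "det (C * V) = (C * V) $$ (0, 0) * det (mat n n (\<lambda>(l, j). (C * V) $$ (Suc l, Suc j)))"
    by (rule det_expand_first_row) (use C V in \<open>simp_all add: CV del: index_mult_mat\<close>)
  also have "\<dots>
      = X * ((\<Prod>l<n. [:qv ^ l:]) * (\<Prod>j<n. [:qv powi (- int j):]) * c_det k X (int k - 1) n)"
    unfolding minor c_det_def det_scale_rows_cols by (simp add: CV)
  also have "(\<Prod>l<n. [:qv ^ l:]) * (\<Prod>j<n. [:qv powi (- int j):]) = 1"
    by (simp add: prod.distrib[symmetric] mult_to_poly power_int_minus pCons_one flip: power_int_of_nat)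
  finally show ?thesis
    using det_mult[OF C V] det_vdm_kernel_mat unfolding C_def V_def c_det_def by simp
qed

lemma det_qbinom_mat: "det (mat n n (\<lambda>(i, l). [:qbinom (int i) (int l):])) = 1"
proof -
  have "det (mat n n (\<lambda>(i, l). [:qbinom (int i) (int l):]))
      = prod_list (diag_mat (mat n n (\<lambda>(i, l). [:qbinom (int i) (int l):])))"
    by (rule det_lower_triangular[of n]) (auto simp: qbinom_eq_0)
  then show ?thesis
    by (simp add: prod_list_diag_prod pCons_one)
qed

lemma qbinom_mat_mult_c_entry:
  assumes "i < n"
  shows "(\<Sum>l<n. [:qbinom (int i) (int l):] * c_entry k X r l j)
    = X * [:qbinom (int i - int k + r + 1) (int j):] + [:qbinom (int i + r + 1) (int j + 1) * qv ^ j:]"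
proof -
  have "(\<Sum>l<n. [:qbinom (int i) (int l):] * c_entry k X r l j)
      = X * [:\<Sum>l<n. qbinom (int i) (int l) * vdm_kernel (r + 1 - int k) l j:]
        + [:(\<Sum>l<n. qbinom (int i) (int l) * vdm_kernel (r + 1) l (Suc j)) * qv ^ j:]"
    by (simp only: c_entry_def mult_to_poly distrib_left sum.distrib sum_to_poly[symmetric]
        sum_distrib_left sum_distrib_right mult_ac)
  also have "\<dots> = X * [:qbinom (int i + (r + 1 - int k)) (int j):]
      + [:qbinom (int i + (r + 1)) (int (Suc j)) * qv ^ j:]"
    by (simp only: qvandermonde_lessThan[OF assms])
  finally show ?thesis
    by (simp add: algebra_simps)
qed

lemma const_poly_mult_linear: "[:a:] * (X * [:b:] + [:c:]) = smult (a * b) X + [:a * c:]"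
  by (simp add: distrib_left mult.commute)

lemma A_mat_entry:
  assumes "r < k" "i < n" "j < n"
  shows "A_mat n k r $$ (i, j) = [:qv ^ ((k - r - 1) * j):] *
    (monom 1 k * [:qbinom (int i - int k + int r + 1) (int j):]
      + [:qbinom (int i + int r + 1) (int j + 1) * qv ^ j:])"
proof -
  obtain s where "k = Suc (r + s)"
    using less_imp_Suc_add[OF assms(1)] by blast
  then have "qv ^ ((k - r) * j) = qv ^ ((k - r - 1) * j) * qv ^ j"
    by (simp add: power_add[symmetric] add.commute)
  then show ?thesis
    unfolding const_poly_mult_linear using assms(2,3) by (simp add: A_mat_def mult_ac)
qed

lemma det_A_mat_eq_c_det:
  assumes "r < k"
  shows "det (A_mat n k r) = [:qv ^ ((k - r - 1) * (\<Sum>j<n. j)):] * c_det k (monom 1 k) (int r) n"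
proof -
  define P where "P = mat n n (\<lambda>(i, l). [:qbinom (int i) (int l):])"
  define C where "C = mat n n (\<lambda>(l, j). c_entry k (monom 1 k) (int r) l j)"
  have P: "P \<in> carrier_mat n n" and C: "C \<in> carrier_mat n n"
    by (auto simp: P_def C_def)
  have A: "A_mat n k r = mat n n (\<lambda>(i, j). 1 * [:qv ^ ((k - r - 1) * j):] * (P * C) $$ (i, j))"
  proof (rule eq_matI, goal_cases entries)
    case (entries i j)
    then have i: "i < n" and j: "j < n" by auto
    then have "(P * C) $$ (i, j)
        = (\<Sum>l<n. [:qbinom (int i) (int l):] * c_entry k (monom 1 k) (int r) l j)"
      by (simp add: P_def C_def scalar_prod_def atLeast0LessThan)
    then show ?case
      unfolding A_mat_entry[OF assms(1) i j] qbinom_mat_mult_c_entry[OF i] using i j by simp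
  qed (auto simp: A_mat_def)
  have "det (A_mat n k r)
      = (\<Prod>j<n. [:qv ^ ((k - r - 1) * j):]) * det (mat n n (\<lambda>(i, j). (P * C) $$ (i, j)))"
    unfolding A using det_scale_rows_cols[of n "\<lambda>_. 1" "\<lambda>j. [:qv ^ ((k - r - 1) * j):]"] by simp
  also have "mat n n (\<lambda>(i, j). (P * C) $$ (i, j)) = P * C"
    by (rule eq_matI) (use P C in auto)
  also have "det (P * C) = c_det k (monom 1 k) (int r) n"
    using det_mult[OF P C] det_qbinom_mat[of n, folded P_def] unfolding C_def c_det_def by simp
  also have "(\<Prod>j<n. [:qv ^ ((k - r - 1) * j):]) = [:qv ^ ((k - r - 1) * (\<Sum>j<n. j)):]"
    by (simp only: prod_to_poly power_sum sum_distrib_left)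
  finally show ?thesis .
qed

section \<open>Recurrences for the determinants\<close>

lemma det_A_mat_0 [simp]: "det (A_mat 0 k r) = 1"
  unfolding A_mat_def by (rule det_dim_zero) simp

lemma det_A_mat_Suc:
  assumes "0 < r" "r < k"
  shows "det (A_mat (Suc n) k r)
    = det (A_mat (Suc n) k (r - 1)) + smult (qv ^ (k * n + r)) (det (A_mat n k r))"
proof -
  define T where "T = (\<Sum>j<n. j)"
  define X where "X = (monom 1 k :: qfield poly)"
  obtain s where k: "k = Suc (r + s)"
    using less_imp_Suc_add[OF assms(2)] by blast
  have sum_Suc: "(\<Sum>j<Suc n. j) = T + n"
    by (simp add: T_def)
  have "det (A_mat (Suc n) k r) = [:qv ^ ((k - r - 1) * (T + n)):] * c_det k X (int r) (Suc n)"
    unfolding det_A_mat_eq_c_det[OF assms(2)] sum_Suc X_def ..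
  also have "\<dots> = [:qv ^ ((k - r - 1) * (T + n)):]
      * ([:qv ^ (T + n):] * c_det k X (int r - 1) (Suc n)
        + [:qv ^ (n + Suc n * r):] * c_det k X (int r) n)"
    unfolding c_det_Suc sum_Suc ..
  also have "\<dots> = [:qv ^ ((k - (r - 1) - 1) * (T + n)):] * c_det k X (int (r - 1)) (Suc n)
      + [:qv ^ (k * n + r):] * ([:qv ^ ((k - r - 1) * T):] * c_det k X (int r) n)"
    using assms(1) unfolding distrib_left mult.assoc[symmetric] mult_to_poly power_add[symmetric]
    by (simp add: k of_nat_diff algebra_simps)
  also have "\<dots> = det (A_mat (Suc n) k (r - 1)) + smult (qv ^ (k * n + r)) (det (A_mat n k r))"
    using assms by (simp add: det_A_mat_eq_c_det sum_Suc X_def T_def mult_ac)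
  finally show ?thesis .
qed

lemma det_A_mat_Suc_0:
  assumes "0 < k"
  shows "det (A_mat (Suc n) k 0)
    = monom 1 k * det (A_mat n k (k - 1)) + smult (qv ^ (k * n)) (det (A_mat n k 0))"
proof -
  define T where "T = (\<Sum>j<n. j)"
  define X where "X = (monom 1 k :: qfield poly)"
  obtain s where k: "k = Suc s"
    using assms gr0_implies_Suc by blast
  have sum_Suc: "(\<Sum>j<Suc n. j) = T + n"
    by (simp add: T_def)
  have "det (A_mat (Suc n) k 0) = [:qv ^ ((k - 1) * (T + n)):] * c_det k X 0 (Suc n)"
    using det_A_mat_eq_c_det[OF assms, of "Suc n"] unfolding sum_Suc X_def by simp
  also have "\<dots> = [:qv ^ ((k - 1) * (T + n)):]
      * ([:qv ^ (T + n):] * c_det k X (-1) (Suc n) + [:qv ^ n:] * c_det k X 0 n)"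
    using c_det_Suc[of k X 0 n] unfolding sum_Suc by simp
  also have "\<dots> = c_det k X (-1) (Suc n) * [:qv ^ (k * (T + n)):]
      + [:qv ^ (k * n):] * ([:qv ^ ((k - 1) * T):] * c_det k X 0 n)"
    unfolding distrib_left mult.assoc[symmetric] mult_to_poly power_add[symmetric]
    by (simp add: k algebra_simps)
  also have "\<dots> = X * c_det k X (int k - 1) n + smult (qv ^ (k * n)) (det (A_mat n k 0))"
    using c_det_minus_one[of k X n] assms unfolding sum_Suc
    by (simp add: det_A_mat_eq_c_det X_def T_def mult_ac)
  also have "c_det k X (int k - 1) n = det (A_mat n k (k - 1))"
    using assms by (simp add: det_A_mat_eq_c_det X_def of_nat_diff)
  finally show ?thesis
    unfolding X_def .
qed

declare qfib.simps [simp del]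

lemma qfib_less: "n < k \<Longrightarrow> qfib k n = monom 1 n"
  by (subst qfib.simps) simp

lemma qfib_rec:
  "0 < k \<Longrightarrow> k \<le> n \<Longrightarrow>
    qfib k n = monom 1 1 * qfib k (n - 1) + smult (qv ^ (n - k)) (qfib k (n - k))"
  by (subst qfib.simps) simp

lemma monom_mult_det_A_mat:
  assumes "r < k"
  shows "monom 1 r * det (A_mat n k r) = qfib k (k * n + r)"
  using assms
proof (induction n arbitrary: r)
  case 0
  then show ?case by (simp add: qfib_less)
next
  case (Suc n)
  note outer_IH = Suc.IH
  have "0 < k" using Suc.prems by simp
  from Suc.prems show ?case
  proof (induction r)
    case 0
    have "monom 1 k = monom 1 1 * (monom 1 (k - 1) :: qfield poly)"
      using \<open>0 < k\<close> by (simp add: mult_monom)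
    then have "monom 1 0 * det (A_mat (Suc n) k 0)
        = monom 1 1 * (monom 1 (k - 1) * det (A_mat n k (k - 1)))
          + smult (qv ^ (k * n)) (monom 1 0 * det (A_mat n k 0))"
      using det_A_mat_Suc_0[OF \<open>0 < k\<close>] by (simp add: mult.assoc)
    also have "\<dots> = monom 1 1 * qfib k (k * n + (k - 1))
        + smult (qv ^ (k * n)) (qfib k (k * n + 0))"
      using \<open>0 < k\<close> by (simp only: outer_IH diff_less zero_less_one)
    also have "\<dots> = qfib k (k * Suc n + 0)"
      using qfib_rec[OF \<open>0 < k\<close>, of "k * Suc n"] \<open>0 < k\<close> by (simp add: algebra_simps)
    finally show ?case .
  next
    case (Suc r)
    have "monom 1 (Suc r) * det (A_mat (Suc n) k (Suc r))
        = monom 1 1 * (monom 1 r * det (A_mat (Suc n) k r))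
          + smult (qv ^ (k * n + Suc r)) (monom 1 (Suc r) * det (A_mat n k (Suc r)))"
      using det_A_mat_Suc[of "Suc r" k n] Suc.prems by (simp add: mult_monom algebra_simps)
    also have "\<dots> = monom 1 1 * qfib k (k * Suc n + r)
        + smult (qv ^ (k * n + Suc r)) (qfib k (k * n + Suc r))"
      using Suc outer_IH[of "Suc r"] by simp
    also have "\<dots> = qfib k (k * Suc n + Suc r)"
      using qfib_rec[OF \<open>0 < k\<close>, of "k * Suc n + Suc r"] by (simp add: algebra_simps)
    finally show ?case .
  qed
qed

theorem theorem5:
  fixes k r n :: nat
  assumes "k \<ge> 1" and "r < k" and "n \<ge> 1"
  shows "monom 1 r * det (A_mat n k r) = qfib k (k * n + r)"
  using monom_mult_det_A_mat[OF assms(2)] .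

end
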